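(* Let $n\ge3$ and $k\ge0$ be integers with $n\le k$. If $S\subseteq\mathrm{Inc}(A,B)$ is an independent set in $G_n^k$ that is not reversible, then \[|S|\le \frac{(k+1)(k+2)}{2}+2-n.\]
   Context: For integers $n\ge3$, $k\ge0$, the crown $S_n^k$ is the poset with ground set $A\cup B$, $A=\{a_1,\dots,a_{n+k}\}$, $B=\{b_1,\dots,b_{n+k}\}$, indices cyclic modulo $n+k$; elements of $A$ are pairwise incomparable, as are elements of $B$, and $a_i$ is incomparable to $b_j$ when $j\in\{i,i+1,\dots,i+k\}$ (mod $n+k$), while $a_i<b_j$ otherwise. $\mathrm{Inc}(A,B)$ is the set of pairs $(a,b)\in A\times B$ with $a$ incomparable to $b$. The graph $G_n^k$ has vertex set $\mathrm{Inc}(A,B)$, with $(a,b)$ adjacent to $(x,y)$ iff $a<y$ and $x<b$ in $S_n^k$. A set $R\subseteq\mathrm{Inc}(A,B)$ is reversible if there is a linear extension $L$ of $S_n^k$ with $b<a$ in $L$ for all $(a,b)\in R$. *)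

theory Defs
  imports Complex_Main
begin

text \<open>Elements of the crown S_n^k: a_i is CA i, b_j is CB j, with indices in {0..<n+k}
  (cyclic modulo n+k).\<close>
datatype crown_elem = CA nat | CB nat

definition crown_ground :: "nat \<Rightarrow> nat \<Rightarrow> crown_elem set" where
  "crown_ground n k = {CA i | i. i < n + k} \<union> {CB j | j. j < n + k}"

definition crown_inc_idx :: "nat \<Rightarrow> nat \<Rightarrow> nat \<Rightarrow> nat \<Rightarrow> bool" where
  "crown_inc_idx n k i j \<longleftrightarrow> (\<exists>t\<le>k. j = (i + t) mod (n + k))"

definition crown_less :: "nat \<Rightarrow> nat \<Rightarrow> crown_elem \<Rightarrow> crown_elem \<Rightarrow> bool" where
  "crown_less n k x y \<longleftrightarrow>
     (\<exists>i j. x = CA i \<and> y = CB j \<and> i < n + k \<and> j < n + k \<and> \<not> crown_inc_idx n k i j)"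

definition crown_Inc :: "nat \<Rightarrow> nat \<Rightarrow> (crown_elem \<times> crown_elem) set" where
  "crown_Inc n k = {(CA i, CB j) | i j. i < n + k \<and> j < n + k \<and> crown_inc_idx n k i j}"

definition G_adj :: "nat \<Rightarrow> nat \<Rightarrow> crown_elem \<times> crown_elem \<Rightarrow> crown_elem \<times> crown_elem \<Rightarrow> bool" where
  "G_adj n k p q \<longleftrightarrow> crown_less n k (fst p) (snd q) \<and> crown_less n k (fst q) (snd p)"

definition G_independent :: "nat \<Rightarrow> nat \<Rightarrow> (crown_elem \<times> crown_elem) set \<Rightarrow> bool" where
  "G_independent n k S \<longleftrightarrow> S \<subseteq> crown_Inc n k \<and> (\<forall>p\<in>S. \<forall>q\<in>S. \<not> G_adj n k p q)"

definition linear_extension :: "nat \<Rightarrow> nat \<Rightarrow> crown_elem rel \<Rightarrow> bool" where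
  "linear_extension n k L \<longleftrightarrow>
     L \<subseteq> crown_ground n k \<times> crown_ground n k \<and>
     strict_linear_order_on (crown_ground n k) L \<and>
     (\<forall>x y. crown_less n k x y \<longrightarrow> (x, y) \<in> L)"

definition reversible :: "nat \<Rightarrow> nat \<Rightarrow> (crown_elem \<times> crown_elem) set \<Rightarrow> bool" where
  "reversible n k R \<longleftrightarrow> (\<exists>L. linear_extension n k L \<and> (\<forall>(a, b)\<in>R. (b, a) \<in> L))"

end

theory Submission
  imports Defs
begin

(*
  For an index i used by S let T be the set of offsets t \<le> k with (a_i, b_(i+t)) in S.
  The indices x with a_x below some partner of a_i are those 1 .. n - 1 steps after some
  i + t, t in T; this union of windows has at least |T| + n - 2 elements, and n - 2 more
  if T has a gap of length at least n. Hence the set F_i of the remaining indices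
  satisfies |T| + |F_i| \<le> k + 2, with n - 2 to spare in the gapped case. Independence of
  S means that of two used indices one lies in the set F of the other, so for m used
  indices the F_i have total size at least m(m + 1)/2. If no T has a wide gap, the indices
  below partners of a_i form a circular arc, and the F_i cover all n + k indices: a point
  common to all arcs would make the crown order together with the reversed pairs of S
  acyclic, so S would be reversible. Since |S| \<le> \<Sum>|T|, maximising the resulting
  quadratic in m gives the bound in both cases.
*)

lemma finite_wf_strict_linear_extension:
  assumes "finite X" "Q \<subseteq> X \<times> X" "wf Q"
  shows "\<exists>L \<subseteq> X \<times> X. strict_linear_order_on X L \<and> Q \<subseteq> L"
  using assms
proof (induction X arbitrary: Q rule: finite_psubset_induct)
  case (psubset X)
  show ?case
  proof (cases "X = {}")
    case True
    then show ?thesis using psubset.prems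
      by (auto simp: strict_linear_order_on_def total_on_def irrefl_def trans_def)
  next
    case False
    then obtain y where y: "y \<in> X" "\<And>w. (w, y) \<in> Q \<Longrightarrow> w \<notin> X"
      using wfE_min[OF psubset.prems(2)] by blast
    define X' where "X' = X - {y}"
    have "X' \<subset> X" using y(1) X'_def by auto
    moreover have "Restr Q X' \<subseteq> X' \<times> X'" by blast
    moreover have "wf (Restr Q X')" by (rule wf_subset[OF psubset.prems(2)]) blast
    ultimately have "\<exists>L' \<subseteq> X' \<times> X'. strict_linear_order_on X' L' \<and> Restr Q X' \<subseteq> L'"
      by (rule psubset.IH)
    then obtain L' where L': "L' \<subseteq> X' \<times> X'" "strict_linear_order_on X' L'" "Restr Q X' \<subseteq> L'"
      by blast
    define L where "L = L' \<union> {y} \<times> X'"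
    have "y \<notin> X'" using X'_def by auto
    have "trans L"
      using L'(1,2) \<open>y \<notin> X'\<close> unfolding L_def strict_linear_order_on_def trans_def by blast
    moreover have "irrefl L"
      using L'(1,2) \<open>y \<notin> X'\<close> unfolding L_def strict_linear_order_on_def irrefl_def by blast
    moreover have "total_on X L"
      using L'(2) y(1) unfolding L_def strict_linear_order_on_def total_on_def X'_def by blast
    ultimately have "strict_linear_order_on X L" unfolding strict_linear_order_on_def by blast
    moreover have "Q \<subseteq> L"
    proof
      fix p assume p: "p \<in> Q"
      then obtain u v where uv: "p = (u, v)" "u \<in> X" "v \<in> X" using psubset.prems(1) by blast
      have "v \<noteq> y" using y(2) p uv by blast
      then show "p \<in> L" using uv p L'(3) unfolding L_def X'_def by (cases "u = y") auto
    qed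
    moreover have "L \<subseteq> X \<times> X" using L'(1) y(1) unfolding L_def X'_def by blast
    ultimately show ?thesis by blast
  qed
qed

definition window :: "nat set \<Rightarrow> nat \<Rightarrow> nat set" where
  "window T n = (\<Union>t\<in>T. {t + 1..t + n - 1})"

definition wide_gap :: "nat set \<Rightarrow> nat \<Rightarrow> bool" where
  "wide_gap T n \<longleftrightarrow> (\<exists>t\<in>T. (\<exists>s\<in>T. t < s) \<and> (\<forall>s\<in>T. t < s \<longrightarrow> t + n \<le> s))"

lemma finite_window: "finite T \<Longrightarrow> finite (window T n)"
  unfolding window_def by auto

lemma window_subset:
  assumes "T \<subseteq> {..k}" "2 \<le> n"
  shows "window T n \<subseteq> {1..<n + k}"
  unfolding window_def using assms by (auto; fastforce)

lemma card_window_ge: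
  assumes "finite T" "T \<noteq> {}" "2 \<le> n"
  shows "card T + (n - 2) \<le> card (window T n)"
proof -
  define M where "M = Max T"
  have M: "M \<in> T" "\<forall>t\<in>T. t \<le> M" using assms M_def by auto
  have sub: "Suc ` T \<union> {M + 2..M + n - 1} \<subseteq> window T n"
  proof
    fix x assume "x \<in> Suc ` T \<union> {M + 2..M + n - 1}"
    then consider t where "t \<in> T" "x = Suc t" | "x \<in> {M + 2..M + n - 1}" by blast
    then show "x \<in> window T n"
    proof cases
      case (1 t) then show ?thesis unfolding window_def using assms(3) by (intro UN_I[of t]) auto
    next
      case 2 then show ?thesis unfolding window_def using M(1) by (intro UN_I[of M]) auto
    qed
  qed
  have disj: "Suc ` T \<inter> {M + 2..M + n - 1} = {}" using M by force
  have "card (Suc ` T \<union> {M + 2..M + n - 1}) = card T + (n - 2)"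
    using card_Un_disjoint[OF _ _ disj] assms(1) card_image[of Suc T] by simp
  then show ?thesis using card_mono[OF finite_window[OF assms(1)] sub] by simp
qed

text \<open>A wide gap after \<open>t\<^sub>0\<close> leaves a second run of \<open>n - 2\<close> window points that are not
  successors of elements of \<open>T\<close>.\<close>
lemma card_window_ge_wide_gap:
  assumes "finite T" "2 \<le> n" "wide_gap T n"
  shows "card T + 2 * (n - 2) \<le> card (window T n)"
proof -
  obtain t0 s0 where t0: "t0 \<in> T" "s0 \<in> T" "t0 < s0" and gap: "\<forall>s\<in>T. t0 < s \<longrightarrow> t0 + n \<le> s"
    using assms(3) unfolding wide_gap_def by blast
  define M where "M = Max T"
  have "T \<noteq> {}" using t0(1) by blast
  then have M: "M \<in> T" "\<forall>t\<in>T. t \<le> M" using assms(1) M_def by auto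
  have "t0 + n \<le> M" using gap M t0 by (meson le_trans less_le_trans)
  have sub: "(Suc ` T \<union> {t0 + 2..t0 + n - 1}) \<union> {M + 2..M + n - 1} \<subseteq> window T n"
  proof
    fix x assume "x \<in> (Suc ` T \<union> {t0 + 2..t0 + n - 1}) \<union> {M + 2..M + n - 1}"
    then consider t where "t \<in> T" "x = Suc t" | "x \<in> {M + 2..M + n - 1}" | "x \<in> {t0 + 2..t0 + n - 1}"
      by blast
    then show "x \<in> window T n"
    proof cases
      case (1 t) then show ?thesis unfolding window_def using assms(2) by (intro UN_I[of t]) auto
    next
      case 2 then show ?thesis unfolding window_def using M(1) by (intro UN_I[of M]) auto
    next
      case 3 then show ?thesis unfolding window_def using t0(1) by (intro UN_I[of t0]) auto
    qed
  qed
  have disj1: "Suc ` T \<inter> {t0 + 2..t0 + n - 1} = {}"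
  proof -
    have False if "s \<in> T" "Suc s \<in> {t0 + 2..t0 + n - 1}" for s
      using that gap by (cases "t0 < s") auto
    then show ?thesis by blast
  qed
  have c1: "card (Suc ` T \<union> {t0 + 2..t0 + n - 1}) = card T + (n - 2)"
    using card_Un_disjoint[OF _ _ disj1] assms(1) card_image[of Suc T] by simp
  have disj2: "(Suc ` T \<union> {t0 + 2..t0 + n - 1}) \<inter> {M + 2..M + n - 1} = {}"
    using M \<open>t0 + n \<le> M\<close> by force
  have "card ((Suc ` T \<union> {t0 + 2..t0 + n - 1}) \<union> {M + 2..M + n - 1}) = card T + 2 * (n - 2)"
    using card_Un_disjoint[OF _ _ disj2] assms(1) c1 by simp
  then show ?thesis using card_mono[OF finite_window[OF assms(1)] sub] by simp
qed

lemma window_eq_interval: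
  assumes "finite T" "T \<noteq> {}" "2 \<le> n" "\<not> wide_gap T n"
  shows "window T n = {Min T + 1..Max T + n - 1}"
proof
  show "window T n \<subseteq> {Min T + 1..Max T + n - 1}"
  proof
    fix x assume "x \<in> window T n"
    then obtain t where t: "t \<in> T" "x \<in> {t + 1..t + n - 1}" unfolding window_def by blast
    have "Min T \<le> t" "t \<le> Max T" using t(1) assms(1) by auto
    then show "x \<in> {Min T + 1..Max T + n - 1}" using t(2) by auto
  qed
next
  have close: "\<exists>s\<in>T. t < s \<and> s < t + n" if "t \<in> T" "\<exists>s\<in>T. t < s" for t
    using assms(4) that unfolding wide_gap_def by (meson not_le)
  show "{Min T + 1..Max T + n - 1} \<subseteq> window T n"
  proof
    fix y assume y: "y \<in> {Min T + 1..Max T + n - 1}"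
    define A where "A = {s\<in>T. s < y}"
    have "Min T \<in> A" using y assms(1,2) A_def by auto
    then have "A \<noteq> {}" "finite A" using assms(1) A_def by auto
    define t where "t = Max A"
    have tA: "t \<in> A" "\<forall>s\<in>A. s \<le> t" using \<open>A \<noteq> {}\<close> \<open>finite A\<close> t_def by auto
    then have t: "t \<in> T" "t < y" using A_def by auto
    show "y \<in> window T n"
    proof (cases "y \<le> t + n - 1")
      case True
      then show ?thesis unfolding window_def using t by (intro UN_I[of t]) auto
    next
      case far: False
      show ?thesis
      proof (cases "\<exists>s\<in>T. t < s")
        case True
        then obtain s where s: "s \<in> T" "t < s" "s < t + n" using close t(1) by blast
        then have "s \<in> A" using far A_def by auto
        then show ?thesis using tA(2) s(2) by (simp add: leD)
      next
        case False
        then have "t = Max T" using t(1) assms(1) by (intro Max_eqI[symmetric]) (auto simp: not_less)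
        then show ?thesis using y far by auto
      qed
    qed
  qed
qed

lemma card_less_pairs:
  fixes V :: "'a::linorder set"
  assumes "finite V"
  shows "2 * card {p \<in> V \<times> V. fst p < snd p} + card V = card V * card V"
proof -
  define C where "C = {p \<in> V \<times> V. fst p < snd p}"
  define C' where "C' = {p \<in> V \<times> V. snd p < fst p}"
  define D where "D = (\<lambda>a. (a, a)) ` V"
  have VV: "V \<times> V = D \<union> C \<union> C'" unfolding C_def C'_def D_def by auto
  have "C' = prod.swap ` C" unfolding C_def C'_def by force
  then have cC': "card C' = card C" by (simp add: card_image)
  have cD: "card D = card V" unfolding D_def by (rule card_image) (simp add: inj_on_def)
  have d1: "D \<inter> C = {}" and d2: "(D \<union> C) \<inter> C' = {}" unfolding D_def C_def C'_def by auto
  have fin: "finite D" "finite C" "finite C'" using assms VV by (metis finite_SigmaI finite_Un)+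
  have "card (V \<times> V) = card D + card C + card C'"
    unfolding VV using card_Un_disjoint[OF _ _ d2] card_Un_disjoint[OF _ _ d1] fin by simp
  then show ?thesis using cC' cD unfolding C_def[symmetric] by (simp add: card_cartesian_product)
qed

lemma card_pairwise_cover_le_sum_card_Int:
  fixes V :: "'a::linorder set" and H :: "'a \<Rightarrow> 'a set"
  assumes "finite V" "\<forall>a\<in>V. a \<in> H a"
    and pc: "\<forall>a\<in>V. \<forall>x\<in>V. a \<noteq> x \<longrightarrow> a \<in> H x \<or> x \<in> H a"
  shows "card V * (card V + 1) \<le> 2 * (\<Sum>a\<in>V. card (H a \<inter> V))"
proof -
  define P where "P = (SIGMA a:V. H a \<inter> V)"
  have cP: "card P = (\<Sum>a\<in>V. card (H a \<inter> V))"
    unfolding P_def using assms(1) by (subst card_SigmaI) auto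
  have "finite P" unfolding P_def using assms(1) by auto
  define P1 where "P1 = {p \<in> P. fst p < snd p}"
  define P2 where "P2 = {p \<in> P. snd p < fst p}"
  define D where "D = (\<lambda>a. (a, a)) ` V"
  have cD: "card D = card V" unfolding D_def by (rule card_image) (simp add: inj_on_def)
  have sub: "D \<union> P1 \<union> P2 \<subseteq> P" unfolding D_def P1_def P2_def P_def using assms(2) by auto
  have d1: "D \<inter> P1 = {}" and d2: "(D \<union> P1) \<inter> P2 = {}" unfolding D_def P1_def P2_def by auto
  have fin: "finite D" "finite P1" "finite P2" using \<open>finite P\<close> sub by (meson finite_subset le_supE)+
  have cDP: "card D + card P1 + card P2 \<le> card P"
    using card_mono[OF \<open>finite P\<close> sub] card_Un_disjoint[OF _ _ d2] card_Un_disjoint[OF _ _ d1] fin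
    by simp
  define C where "C = {p \<in> V \<times> V. fst p < snd p}"
  have "C \<subseteq> P1 \<union> prod.swap ` P2"
  proof
    fix p assume "p \<in> C"
    then obtain a x where ax: "p = (a, x)" "a \<in> V" "x \<in> V" "a < x" unfolding C_def by auto
    show "p \<in> P1 \<union> prod.swap ` P2"
    proof (cases "x \<in> H a")
      case True
      then show ?thesis using ax unfolding P1_def P_def by auto
    next
      case False
      then have "(x, a) \<in> P2" using pc ax unfolding P2_def P_def by auto
      then show ?thesis using ax by (metis UnI2 image_eqI swap_simp)
    qed
  qed
  then have "card C \<le> card P1 + card P2"
    using card_mono[of "P1 \<union> prod.swap ` P2" C] card_Un_le[of P1 "prod.swap ` P2"]
      card_image_le[OF fin(3), of prod.swap] fin by simp
  moreover have "2 * card C + card V = card V * card V" unfolding C_def by (rule card_less_pairs[OF assms(1)])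
  ultimately show ?thesis using cP cDP cD by (simp add: algebra_simps)
qed

lemma card_pairwise_cover_le_sum_card:
  fixes V :: "'a::linorder set" and H :: "'a \<Rightarrow> 'a set"
  assumes "finite V" "\<forall>a\<in>V. finite (H a)" "\<forall>a\<in>V. a \<in> H a"
    and "\<forall>a\<in>V. \<forall>x\<in>V. a \<noteq> x \<longrightarrow> a \<in> H x \<or> x \<in> H a"
  shows "card V * (card V + 1) + 2 * card ((\<Union>a\<in>V. H a) - V) \<le> 2 * (\<Sum>a\<in>V. card (H a))"
proof -
  have "(\<Sum>a\<in>V. card (H a)) = (\<Sum>a\<in>V. card (H a \<inter> V)) + (\<Sum>a\<in>V. card (H a - V))"
    unfolding sum.distrib[symmetric]
    by (rule sum.cong) (use assms(2) in \<open>auto intro: card_Int_Diff\<close>)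
  moreover have "card ((\<Union>a\<in>V. H a) - V) \<le> (\<Sum>a\<in>V. card (H a - V))"
  proof -
    have "(\<Union>a\<in>V. H a) - V = (\<Union>a\<in>V. H a - V)" by auto
    then show ?thesis using card_UN_le[OF assms(1), of "\<lambda>a. H a - V"] by simp
  qed
  ultimately show ?thesis using card_pairwise_cover_le_sum_card_Int[OF assms(1,3,4)] by linarith
qed

lemma two_mult_le_consecutive: "2 * m * (c + 1) \<le> c * (c + 1) + m * (m + 1 :: nat)"
proof -
  define x where "x = int c - int m"
  have "0 \<le> x * (x + 1)"
  proof (cases "0 \<le> x")
    case False
    then have "x + 1 \<le> 0" by simp
    then show ?thesis using False by (simp add: mult_nonpos_nonpos)
  qed simp
  then have "int (2 * m * (c + 1)) \<le> int (c * (c + 1) + m * (m + 1))"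
    unfolding x_def by (simp add: algebra_simps)
  then show ?thesis by (simp only: of_nat_le_iff)
qed

lemma add_mod_eq_imp_eq:
  fixes N a u v :: nat
  assumes "u < N" "v < N" "(a + u) mod N = (a + v) mod N"
  shows "u = v"
proof -
  have "p = q" if "p \<le> q" "q < N" "(a + p) mod N = (a + q) mod N" for p q :: nat
  proof -
    have "N dvd (a + q) - (a + p)" using mod_eq_dvd_iff_nat[of "a + p" "a + q" N] that by simp
    then have "N dvd q - p" by simp
    moreover have "q - p < N" using that by simp
    ultimately have "q - p = 0" by (metis dvd_imp_le neq0_conv not_le)
    then show ?thesis using that(1) by simp
  qed
  then show ?thesis using assms by (metis nat_le_linear)
qed

lemma eq_add_mod_iff:
  fixes a x w N :: nat
  assumes "a < N" "x < N" "w < N"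
  shows "x = (a + w) mod N \<longleftrightarrow> w = (x + N - a) mod N"
proof -
  have x_eq: "x = (a + (x + N - a) mod N) mod N"
  proof -
    have "(a + (x + N - a) mod N) mod N = (a + (x + N - a)) mod N" by (simp add: mod_add_right_eq)
    also have "a + (x + N - a) = x + N" using assms by simp
    finally show ?thesis using assms by simp
  qed
  moreover have "(x + N - a) mod N < N" using assms by simp
  ultimately show ?thesis using add_mod_eq_imp_eq[OF assms(3)] by metis
qed

lemma mod_offset_trans:
  fixes N a x z :: nat
  assumes "a < N" "x < N" "z < N"
  shows "(x + N - a) mod N = ((z + N - a) mod N + N - (z + N - x) mod N) mod N"
proof -
  have "(z + N - x) mod N < N" using assms by simp
  then have "int ((z + N - a) mod N + N - (z + N - x) mod N) =
      int ((z + N - a) mod N) - int ((z + N - x) mod N) + int N" by simp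
  then have "int (((z + N - a) mod N + N - (z + N - x) mod N) mod N)
      = (int (z + N - a) mod int N - int (z + N - x) mod int N) mod int N"
    by (simp add: zmod_int)
  also have "\<dots> = (int x - int a) mod int N"
    using assms by (simp add: mod_diff_eq of_nat_diff)
  also have "\<dots> = (int x + int N - int a) mod int N"
    by (metis add.commute add_diff_eq mod_add_self1)
  also have "\<dots> = int ((x + N - a) mod N)"
    using assms by (simp add: zmod_int of_nat_diff)
  finally show ?thesis by simp
qed

text \<open>Place each \<open>a \<in> W\<close> on a cycle of length \<open>N\<close> at distance \<open>d a\<close> before a common point \<open>z\<close>;
  then \<open>In a\<close> is the arc of offsets \<open>L a..U a\<close> after \<open>a\<close>, which contains \<open>z\<close> but not \<open>a\<close>.
  Either the point farthest before \<open>z\<close> or the point nearest to \<open>z\<close> sees no point of \<open>W\<close>.\<close>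
lemma circular_arcs_source:
  fixes N :: nat and W :: "'a set" and d L U :: "'a \<Rightarrow> nat" and In :: "'a \<Rightarrow> 'a set"
  assumes "finite W" "W \<noteq> {}" and d: "\<forall>a\<in>W. d a < N"
    and mem: "\<forall>a\<in>W. \<forall>x\<in>W. x \<in> In a \<longleftrightarrow> L a \<le> (d a + N - d x) mod N \<and> (d a + N - d x) mod N \<le> U a"
    and arc: "\<forall>a\<in>W. 1 \<le> L a \<and> L a \<le> d a \<and> d a \<le> U a"
    and asym: "\<forall>a\<in>W. \<forall>x\<in>W. a \<notin> In x \<or> x \<notin> In a"
  shows "\<exists>a\<in>W. \<forall>x\<in>W. x \<notin> In a"
proof -
  have fin: "finite (d ` W)" "d ` W \<noteq> {}" using assms(1,2) by auto
  obtain lo where "lo \<in> W" "d lo = Max (d ` W)" using Max_in[OF fin] by auto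
  then have lo: "lo \<in> W" "\<forall>x\<in>W. d x \<le> d lo" using fin by auto
  obtain hi where "hi \<in> W" "d hi = Min (d ` W)" using Min_in[OF fin] by auto
  then have hi: "hi \<in> W" "\<forall>x\<in>W. d hi \<le> d x" using fin by auto
  have from_lo: "(d lo + N - d x) mod N = d lo - d x" if "x \<in> W" for x
  proof -
    have "d lo + N - d x = (d lo - d x) + N" "d lo - d x < N" using lo that d by auto
    then show ?thesis by (metis mod_add_self2 mod_less)
  qed
  show ?thesis
  proof (cases "hi \<in> In lo")
    case False
    have "d lo - d hi \<le> U lo" using arc lo(1) by (meson diff_le_self le_trans)
    then have "d lo - d hi < L lo"
      using False mem[rule_format, OF lo(1) hi(1)] from_lo[OF hi(1)] by auto
    then have "x \<notin> In lo" if "x \<in> W" for x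
      using mem[rule_format, OF lo(1) that] from_lo[OF that] hi(2) that by auto
    then show ?thesis using lo(1) by blast
  next
    case True
    then have "lo \<notin> In hi" using asym lo(1) hi(1) by blast
    have "x \<notin> In hi" if "x \<in> W" for x
    proof (cases "d x = d hi")
      case True
      then show ?thesis using mem[rule_format, OF hi(1) that] arc hi(1) by auto
    next
      case False
      then have "d hi < d x" "d x \<le> d lo" using hi(2) lo(2) that by (auto simp: le_neq_implies_less)
      have wrap: "(d hi + N - d y) mod N = d hi + N - d y" if "y \<in> W" "d hi < d y" for y
        using that d by (intro mod_less) auto
      have "L hi \<le> d hi + N - d lo" using arc hi(1) d lo(1) by fastforce
      then have "U hi < d hi + N - d lo"
        using \<open>lo \<notin> In hi\<close> mem[rule_format, OF hi(1) lo(1)] wrap[OF lo(1)] \<open>d hi < d x\<close> \<open>d x \<le> d lo\<close>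
        by auto
      moreover have "d hi + N - d lo \<le> d hi + N - d x" using \<open>d x \<le> d lo\<close> d that by auto
      ultimately show ?thesis using mem[rule_format, OF hi(1) that] wrap[OF that \<open>d hi < d x\<close>] by auto
    qed
    then show ?thesis using hi(1) by blast
  qed
qed

definition crown_offsets :: "nat \<Rightarrow> nat \<Rightarrow> (crown_elem \<times> crown_elem) set \<Rightarrow> nat \<Rightarrow> nat set" where
  "crown_offsets n k S a = {t. t \<le> k \<and> (CA a, CB ((a + t) mod (n + k))) \<in> S}"

definition paired_indices :: "nat \<Rightarrow> nat \<Rightarrow> (crown_elem \<times> crown_elem) set \<Rightarrow> nat set" where
  "paired_indices n k S = {a. a < n + k \<and> crown_offsets n k S a \<noteq> {}}"

definition below_partners :: "nat \<Rightarrow> nat \<Rightarrow> (crown_elem \<times> crown_elem) set \<Rightarrow> nat \<Rightarrow> nat set" where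
  "below_partners n k S a = {x. \<exists>b. (CA a, CB b) \<in> S \<and> crown_less n k (CA x) (CB b)}"

definition free_indices :: "nat \<Rightarrow> nat \<Rightarrow> (crown_elem \<times> crown_elem) set \<Rightarrow> nat \<Rightarrow> nat set" where
  "free_indices n k S a = {0..<n + k} - below_partners n k S a"

lemma crown_offsets_subset: "crown_offsets n k S a \<subseteq> {..k}"
  unfolding crown_offsets_def by auto

lemma finite_crown_offsets: "finite (crown_offsets n k S a)"
  by (rule finite_subset[OF crown_offsets_subset]) simp

lemma finite_paired_indices: "finite (paired_indices n k S)"
  by (rule finite_subset[of _ "{..<n + k}"]) (auto simp: paired_indices_def)

lemma crown_Inc_offset:
  assumes "S \<subseteq> crown_Inc n k" "(CA a, CB b) \<in> S"
  obtains t where "t \<in> crown_offsets n k S a" "b = (a + t) mod (n + k)" "a < n + k"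
proof -
  have "a < n + k" "crown_inc_idx n k a b" using assms unfolding crown_Inc_def by auto
  moreover from this obtain t where "t \<le> k" "b = (a + t) mod (n + k)"
    unfolding crown_inc_idx_def by blast
  ultimately show thesis using assms(2) by (intro that[of t]) (simp_all add: crown_offsets_def)
qed

lemma paired_indicesI:
  assumes "S \<subseteq> crown_Inc n k" "(CA a, CB b) \<in> S"
  shows "a \<in> paired_indices n k S"
  by (rule crown_Inc_offset[OF assms]) (auto simp: paired_indices_def)

lemma card_le_sum_card_crown_offsets:
  assumes "S \<subseteq> crown_Inc n k"
  shows "card S \<le> (\<Sum>a\<in>paired_indices n k S. card (crown_offsets n k S a))"
proof -
  let ?P = "paired_indices n k S"
  let ?f = "\<lambda>a t. (CA a, CB ((a + t) mod (n + k)))"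
  have "S \<subseteq> (\<Union>a\<in>?P. ?f a ` crown_offsets n k S a)"
  proof
    fix p assume "p \<in> S"
    then obtain a b where p: "p = (CA a, CB b)" using assms unfolding crown_Inc_def by blast
    with \<open>p \<in> S\<close> obtain t where "t \<in> crown_offsets n k S a" "b = (a + t) mod (n + k)"
      using crown_Inc_offset[OF assms] by metis
    then show "p \<in> (\<Union>a\<in>?P. ?f a ` crown_offsets n k S a)"
      using p paired_indicesI[OF assms] \<open>p \<in> S\<close> by blast
  qed
  then have "card S \<le> card (\<Union>a\<in>?P. ?f a ` crown_offsets n k S a)"
    by (rule card_mono[rotated]) (simp add: finite_paired_indices finite_crown_offsets)
  also have "\<dots> \<le> (\<Sum>a\<in>?P. card (?f a ` crown_offsets n k S a))"
    by (rule card_UN_le[OF finite_paired_indices])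
  also have "\<dots> \<le> (\<Sum>a\<in>?P. card (crown_offsets n k S a))"
    by (rule sum_mono) (rule card_image_le[OF finite_crown_offsets])
  finally show ?thesis .
qed

lemma not_mutually_below:
  assumes "G_independent n k S" "a \<in> below_partners n k S x"
  shows "x \<notin> below_partners n k S a"
proof
  assume "x \<in> below_partners n k S a"
  then obtain b' where "(CA a, CB b') \<in> S" "crown_less n k (CA x) (CB b')"
    unfolding below_partners_def by blast
  moreover obtain b where "(CA x, CB b) \<in> S" "crown_less n k (CA a) (CB b)"
    using assms(2) unfolding below_partners_def by blast
  ultimately have "G_adj n k (CA a, CB b') (CA x, CB b)" unfolding G_adj_def by simp
  then show False using assms(1) \<open>(CA a, CB b') \<in> S\<close> \<open>(CA x, CB b) \<in> S\<close>
    unfolding G_independent_def by blast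
qed

lemma crown_less_iff_offset:
  assumes "x < n + k" "b < n + k"
  shows "crown_less n k (CA x) (CB b) \<longleftrightarrow> (\<exists>d. 1 \<le> d \<and> d < n \<and> x = (b + d) mod (n + k))"
proof
  let ?N = "n + k"
  assume "crown_less n k (CA x) (CB b)"
  then have ninc: "\<not> crown_inc_idx n k x b" unfolding crown_less_def by auto
  define d where "d = (x + ?N - b) mod ?N"
  have "d < ?N" unfolding d_def by (rule mod_less_divisor) (use assms in linarith)
  then have x: "x = (b + d) mod ?N" using eq_add_mod_iff[OF assms(2,1)] d_def by blast
  have "d \<noteq> 0"
  proof
    assume "d = 0"
    then have "b = (x + 0) mod ?N" using x assms(2) by simp
    then show False using ninc unfolding crown_inc_idx_def by blast
  qed
  moreover have "d < n"
  proof (rule ccontr)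
    assume "\<not> d < n"
    have "(x + (?N - d)) mod ?N = (b + d + (?N - d)) mod ?N" using x by (simp add: mod_add_left_eq)
    also have "\<dots> = b" using \<open>d < ?N\<close> assms(2) by simp
    finally have "b = (x + (?N - d)) mod ?N" ..
    moreover have "?N - d \<le> k" using \<open>\<not> d < n\<close> by simp
    ultimately show False using ninc unfolding crown_inc_idx_def by blast
  qed
  ultimately show "\<exists>d. 1 \<le> d \<and> d < n \<and> x = (b + d) mod ?N" using x by (intro exI[of _ d]) simp
next
  let ?N = "n + k"
  assume "\<exists>d. 1 \<le> d \<and> d < n \<and> x = (b + d) mod ?N"
  then obtain d where d: "1 \<le> d" "d < n" "x = (b + d) mod ?N" by blast
  have "\<not> crown_inc_idx n k x b"
  proof
    assume "crown_inc_idx n k x b"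
    then obtain t where "t \<le> k" "b = (x + t) mod ?N" unfolding crown_inc_idx_def by blast
    then have "(b + 0) mod ?N = (b + (d + t)) mod ?N"
      using d(3) assms(2) by (simp add: mod_add_left_eq add.assoc)
    moreover have "d + t < ?N" using \<open>t \<le> k\<close> d(2) by simp
    moreover have "0 < ?N" using d(2) by simp
    ultimately have "0 = d + t" using add_mod_eq_imp_eq[of 0 ?N "d + t" b] by blast
    then show False using d(1) by simp
  qed
  then show "crown_less n k (CA x) (CB b)" using assms unfolding crown_less_def by blast
qed

lemma below_partners_eq_window:
  assumes "S \<subseteq> crown_Inc n k"
  shows "below_partners n k S a = (\<lambda>w. (a + w) mod (n + k)) ` window (crown_offsets n k S a) n"
proof (intro equalityI subsetI)
  fix x assume "x \<in> below_partners n k S a"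
  then obtain b where b: "(CA a, CB b) \<in> S" "crown_less n k (CA x) (CB b)"
    unfolding below_partners_def by blast
  then obtain t where t: "t \<in> crown_offsets n k S a" "b = (a + t) mod (n + k)"
    using crown_Inc_offset[OF assms] by metis
  have "x < n + k" "b < n + k" using b(2) unfolding crown_less_def by auto
  then obtain d where "1 \<le> d" "d < n" "x = (b + d) mod (n + k)" using b(2) crown_less_iff_offset by blast
  then have "t + d \<in> window (crown_offsets n k S a) n" "x = (a + (t + d)) mod (n + k)"
    unfolding window_def using t by ((intro UN_I[of t]), auto simp: mod_add_left_eq add.assoc)
  then show "x \<in> (\<lambda>w. (a + w) mod (n + k)) ` window (crown_offsets n k S a) n" by blast
next
  fix x assume "x \<in> (\<lambda>w. (a + w) mod (n + k)) ` window (crown_offsets n k S a) n"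
  then obtain w t where w: "x = (a + w) mod (n + k)" "w \<in> {t + 1..t + n - 1}"
    and t: "t \<in> crown_offsets n k S a"
    unfolding window_def by blast
  define d where "d = w - t"
  have d: "1 \<le> d" "d < n" using w(2) unfolding d_def by auto
  have x: "x = (a + (t + d)) mod (n + k)" using w unfolding d_def by simp
  define b where "b = (a + t) mod (n + k)"
  have "(CA a, CB b) \<in> S" using t unfolding crown_offsets_def b_def by blast
  moreover have "x = (b + d) mod (n + k)" using x unfolding b_def by (simp add: mod_add_left_eq add.assoc)
  moreover have "b < n + k" "x < n + k" using d unfolding b_def x by simp_all
  ultimately have "crown_less n k (CA x) (CB b)" using crown_less_iff_offset d by blast
  then show "x \<in> below_partners n k S a"
    unfolding below_partners_def using \<open>(CA a, CB b) \<in> S\<close> by blast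
qed

lemma below_partners_subset: "below_partners n k S a \<subseteq> {0..<n + k}"
  unfolding below_partners_def crown_less_def by auto

lemma card_free_indices:
  assumes "S \<subseteq> crown_Inc n k" "2 \<le> n"
  shows "card (free_indices n k S a) = n + k - card (window (crown_offsets n k S a) n)"
proof -
  let ?W = "window (crown_offsets n k S a) n"
  have W: "?W \<subseteq> {1..<n + k}" by (rule window_subset[OF crown_offsets_subset assms(2)])
  have "inj_on (\<lambda>w. (a + w) mod (n + k)) ?W"
  proof (rule inj_onI)
    fix u v assume "u \<in> ?W" "v \<in> ?W" and eq: "(a + u) mod (n + k) = (a + v) mod (n + k)"
    then have "u < n + k" "v < n + k" using W by auto
    then show "u = v" using add_mod_eq_imp_eq eq by blast
  qed
  then have "card (below_partners n k S a) = card ?W"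
    unfolding below_partners_eq_window[OF assms(1)] by (rule card_image)
  moreover have "finite (below_partners n k S a)"
    by (rule finite_subset[OF below_partners_subset]) simp
  ultimately show ?thesis
    unfolding free_indices_def using below_partners_subset by (simp add: card_Diff_subset)
qed

lemma card_crown_offsets_add_card_free_le:
  assumes "S \<subseteq> crown_Inc n k" "2 \<le> n" "a \<in> paired_indices n k S"
  shows "card (crown_offsets n k S a) + card (free_indices n k S a) \<le> k + 2"
proof -
  have "crown_offsets n k S a \<noteq> {}" using assms(3) unfolding paired_indices_def by blast
  then have "card (crown_offsets n k S a) + (n - 2) \<le> card (window (crown_offsets n k S a) n)"
    by (rule card_window_ge[OF finite_crown_offsets _ assms(2)])
  moreover have "card (window (crown_offsets n k S a) n) \<le> n + k"
    using card_mono[OF _ window_subset[OF crown_offsets_subset[of n k S a] assms(2)]] by simp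
  ultimately show ?thesis using card_free_indices[OF assms(1,2), of a] assms(2) by linarith
qed

lemma card_crown_offsets_add_card_free_le_wide_gap:
  assumes "S \<subseteq> crown_Inc n k" "2 \<le> n" "wide_gap (crown_offsets n k S a) n"
  shows "card (crown_offsets n k S a) + card (free_indices n k S a) + (n - 2) \<le> k + 2"
proof -
  have "card (crown_offsets n k S a) + 2 * (n - 2) \<le> card (window (crown_offsets n k S a) n)"
    by (rule card_window_ge_wide_gap[OF finite_crown_offsets assms(2,3)])
  moreover have "card (window (crown_offsets n k S a) n) \<le> n + k"
    using card_mono[OF _ window_subset[OF crown_offsets_subset[of n k S a] assms(2)]] by simp
  ultimately show ?thesis using card_free_indices[OF assms(1,2), of a] assms(2) by linarith
qed

lemma sum_card_crown_offsets_free_le: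
  assumes "S \<subseteq> crown_Inc n k" "2 \<le> n"
  shows "(\<Sum>a\<in>paired_indices n k S. card (crown_offsets n k S a))
    + (\<Sum>a\<in>paired_indices n k S. card (free_indices n k S a)) \<le> card (paired_indices n k S) * (k + 2)"
proof -
  let ?P = "paired_indices n k S"
  have "(\<Sum>a\<in>?P. card (crown_offsets n k S a) + card (free_indices n k S a)) \<le> card ?P * (k + 2)"
    using sum_bounded_above[of ?P _ "k + 2"] card_crown_offsets_add_card_free_le[OF assms] by simp
  then show ?thesis unfolding sum.distrib .
qed

lemma sum_card_crown_offsets_free_le_wide_gap:
  assumes "S \<subseteq> crown_Inc n k" "2 \<le> n"
    and "a0 \<in> paired_indices n k S" "wide_gap (crown_offsets n k S a0) n"
  shows "(\<Sum>a\<in>paired_indices n k S. card (crown_offsets n k S a))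
    + (\<Sum>a\<in>paired_indices n k S. card (free_indices n k S a)) + (n - 2)
    \<le> card (paired_indices n k S) * (k + 2)"
proof -
  let ?P = "paired_indices n k S"
  define f where "f a = card (crown_offsets n k S a) + card (free_indices n k S a)" for a
  have "(\<Sum>a\<in>?P. f a) = f a0 + (\<Sum>a\<in>?P - {a0}. f a)"
    by (rule sum.remove[OF finite_paired_indices assms(3)])
  moreover have "(\<Sum>a\<in>?P - {a0}. f a) \<le> card (?P - {a0}) * (k + 2)"
    using sum_bounded_above[of "?P - {a0}" f "k + 2"] card_crown_offsets_add_card_free_le[OF assms(1,2)]
    unfolding f_def by simp
  moreover have "card ?P * (k + 2) = card (?P - {a0}) * (k + 2) + (k + 2)"
    unfolding card_Suc_Diff1[OF finite_paired_indices assms(3), symmetric] by simp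
  moreover have "f a0 + (n - 2) \<le> k + 2"
    unfolding f_def by (rule card_crown_offsets_add_card_free_le_wide_gap[OF assms(1,2,4)])
  ultimately have "(\<Sum>a\<in>?P. f a) + (n - 2) \<le> card ?P * (k + 2)"
    by linarith
  then show ?thesis unfolding f_def sum.distrib .
qed

lemma card_paired_le_sum_card_free:
  assumes "G_independent n k S"
  shows "card (paired_indices n k S) * (card (paired_indices n k S) + 1)
      + 2 * card ((\<Union>a\<in>paired_indices n k S. free_indices n k S a) - paired_indices n k S)
    \<le> 2 * (\<Sum>a\<in>paired_indices n k S. card (free_indices n k S a))"
proof (rule card_pairwise_cover_le_sum_card[OF finite_paired_indices]; intro ballI impI)
  show "finite (free_indices n k S a)" for a unfolding free_indices_def by simp
  fix a x assume "a \<in> paired_indices n k S" "x \<in> paired_indices n k S"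
  then have "a < n + k" "x < n + k" unfolding paired_indices_def by auto
  then show "a \<in> free_indices n k S a" "a \<in> free_indices n k S x \<or> x \<in> free_indices n k S a"
    using not_mutually_below[OF assms] unfolding free_indices_def by auto
qed

lemma below_partners_arc:
  assumes "S \<subseteq> crown_Inc n k" "2 \<le> n" "a \<in> paired_indices n k S"
    and "\<not> wide_gap (crown_offsets n k S a) n" "x < n + k"
  shows "x \<in> below_partners n k S a \<longleftrightarrow>
    Min (crown_offsets n k S a) + 1 \<le> (x + (n + k) - a) mod (n + k) \<and>
    (x + (n + k) - a) mod (n + k) \<le> Max (crown_offsets n k S a) + n - 1"
proof -
  let ?T = "crown_offsets n k S a" and ?N = "n + k"
  have "?T \<noteq> {}" "a < ?N" using assms(3) unfolding paired_indices_def by auto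
  then have I: "window ?T n = {Min ?T + 1..Max ?T + n - 1}"
    using window_eq_interval[OF finite_crown_offsets _ assms(2,4)] by blast
  have "x \<in> below_partners n k S a \<longleftrightarrow> (\<exists>w\<in>window ?T n. x = (a + w) mod ?N)"
    unfolding below_partners_eq_window[OF assms(1)] by blast
  also have "\<dots> \<longleftrightarrow> (\<exists>w\<in>window ?T n. w = (x + ?N - a) mod ?N)"
  proof (rule bex_cong[OF refl])
    fix w assume "w \<in> window ?T n"
    then have "w < ?N" using window_subset[OF crown_offsets_subset[of n k S a] assms(2)] by auto
    then show "x = (a + w) mod ?N \<longleftrightarrow> w = (x + ?N - a) mod ?N"
      by (rule eq_add_mod_iff[OF \<open>a < ?N\<close> assms(5)])
  qed
  finally show ?thesis unfolding I by auto
qed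

lemma below_partners_source:
  assumes ind: "G_independent n k S" and "2 \<le> n"
    and narrow: "\<forall>a\<in>paired_indices n k S. \<not> wide_gap (crown_offsets n k S a) n"
    and z: "z < n + k" "\<forall>a\<in>paired_indices n k S. z \<in> below_partners n k S a"
    and W: "W \<subseteq> paired_indices n k S" "W \<noteq> {}"
  shows "\<exists>a\<in>W. \<forall>x\<in>W. x \<notin> below_partners n k S a"
proof -
  let ?N = "n + k"
  let ?L = "\<lambda>a. Min (crown_offsets n k S a) + 1" and ?U = "\<lambda>a. Max (crown_offsets n k S a) + n - 1"
  define d where "d y = (z + ?N - y) mod ?N" for y
  have SI: "S \<subseteq> crown_Inc n k" using ind unfolding G_independent_def by blast
  have lt: "a < ?N" if "a \<in> W" for a using that W(1) unfolding paired_indices_def by blast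
  have arc: "x \<in> below_partners n k S a \<longleftrightarrow> ?L a \<le> (x + ?N - a) mod ?N \<and> (x + ?N - a) mod ?N \<le> ?U a"
    if "a \<in> W" "x < ?N" for a x
    using below_partners_arc[OF SI assms(2) _ _ that(2)] narrow W(1) that(1) by blast
  show ?thesis
  proof (rule circular_arcs_source[where N = ?N and d = d and L = ?L and U = ?U])
    show "finite W" using W(1) finite_paired_indices finite_subset by blast
    show "W \<noteq> {}" by (rule W(2))
    have "0 < ?N" using z(1) by linarith
    then show "\<forall>a\<in>W. d a < ?N" unfolding d_def by simp
    show "\<forall>a\<in>W. \<forall>x\<in>W. x \<in> below_partners n k S a \<longleftrightarrow>
        ?L a \<le> (d a + ?N - d x) mod ?N \<and> (d a + ?N - d x) mod ?N \<le> ?U a"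
      using arc lt mod_offset_trans[OF lt lt z(1)] unfolding d_def by auto
    show "\<forall>a\<in>W. 1 \<le> ?L a \<and> ?L a \<le> d a \<and> d a \<le> ?U a"
      using arc z W(1) unfolding d_def by auto
    show "\<forall>a\<in>W. \<forall>x\<in>W. a \<notin> below_partners n k S x \<or> x \<notin> below_partners n k S a"
      using not_mutually_below[OF ind] by blast
  qed
qed

text \<open>In a set without minimal element every \<open>a\<^sub>i\<close> has a partner from \<open>S\<close> and every \<open>b\<^sub>j\<close>
  has some \<open>a\<^sub>x\<close> below it; the indices of its \<open>A\<close>-elements then contradict
  \<open>below_partners_source\<close>.\<close>
lemma wf_crown_less_Un_converse:
  assumes ind: "G_independent n k S" and "2 \<le> n"
    and narrow: "\<forall>a\<in>paired_indices n k S. \<not> wide_gap (crown_offsets n k S a) n"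
    and z: "z < n + k" "\<forall>a\<in>paired_indices n k S. z \<in> below_partners n k S a"
  shows "wf ({(x, y). crown_less n k x y} \<union> S\<inverse>)"
proof (rule wfI_min)
  have SI: "S \<subseteq> crown_Inc n k" using ind unfolding G_independent_def by blast
  fix y0 :: crown_elem and Y assume "y0 \<in> Y"
  show "\<exists>u\<in>Y. \<forall>y. (y, u) \<in> {(x, y). crown_less n k x y} \<union> S\<inverse> \<longrightarrow> y \<notin> Y"
  proof (cases "\<exists>a. CA a \<in> Y \<and> (\<forall>b. CB b \<in> Y \<longrightarrow> (CA a, CB b) \<notin> S)")
    case True
    then obtain a where "CA a \<in> Y" "\<forall>b. CB b \<in> Y \<longrightarrow> (CA a, CB b) \<notin> S" by blast
    moreover have "\<exists>b. y = CB b" if "(CA a, y) \<in> S" for y using that SI unfolding crown_Inc_def by blast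
    ultimately show ?thesis unfolding crown_less_def by blast
  next
    case noA: False
    show ?thesis
    proof (cases "\<exists>b. CB b \<in> Y \<and> (\<forall>x. CA x \<in> Y \<longrightarrow> \<not> crown_less n k (CA x) (CB b))")
      case True
      then obtain b where "CB b \<in> Y" "\<forall>x. CA x \<in> Y \<longrightarrow> \<not> crown_less n k (CA x) (CB b)" by blast
      moreover have "\<nexists>y. (CB b, y) \<in> S" using SI unfolding crown_Inc_def by blast
      ultimately show ?thesis unfolding crown_less_def by blast
    next
      case noB: False
      define W where "W = {a. CA a \<in> Y}"
      have "W \<noteq> {}"
      proof (cases y0)
        case (CB b)
        then show ?thesis using noB \<open>y0 \<in> Y\<close> unfolding W_def by blast
      qed (use \<open>y0 \<in> Y\<close> W_def in blast)
      moreover have "W \<subseteq> paired_indices n k S"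
        using noA paired_indicesI[OF SI] unfolding W_def by blast
      ultimately obtain a where a: "a \<in> W" "\<forall>x\<in>W. x \<notin> below_partners n k S a"
        using below_partners_source[OF ind assms(2) narrow z] by blast
      then obtain b where "CB b \<in> Y" "(CA a, CB b) \<in> S" using noA unfolding W_def by blast
      moreover from this obtain x where "CA x \<in> Y" "crown_less n k (CA x) (CB b)" using noB by blast
      ultimately have "x \<in> W \<inter> below_partners n k S a" unfolding W_def below_partners_def by blast
      then show ?thesis using a by blast
    qed
  qed
qed

lemma reversible_if_wf:
  assumes "S \<subseteq> crown_Inc n k" "wf ({(x, y). crown_less n k x y} \<union> S\<inverse>)"
  shows "reversible n k S"
proof -
  let ?G = "crown_ground n k" and ?Q = "{(x, y). crown_less n k x y} \<union> S\<inverse>"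
  have "{(x, y). crown_less n k x y} \<subseteq> ?G \<times> ?G"
    unfolding crown_less_def crown_ground_def by auto
  moreover have "S\<inverse> \<subseteq> ?G \<times> ?G"
    using assms(1) unfolding crown_Inc_def crown_ground_def by auto
  moreover have "finite ?G" unfolding crown_ground_def by auto
  ultimately obtain L where L: "L \<subseteq> ?G \<times> ?G" "strict_linear_order_on ?G L" "?Q \<subseteq> L"
    using finite_wf_strict_linear_extension[of ?G ?Q] assms(2) by auto
  then have "linear_extension n k L" unfolding linear_extension_def by blast
  moreover have "\<forall>(a, b)\<in>S. (b, a) \<in> L" using L(3) by blast
  ultimately show ?thesis unfolding reversible_def by blast
qed

lemma free_indices_cover:
  assumes "G_independent n k S" "2 \<le> n" "\<not> reversible n k S"
    and "\<forall>a\<in>paired_indices n k S. \<not> wide_gap (crown_offsets n k S a) n"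
  shows "{0..<n + k} \<subseteq> (\<Union>a\<in>paired_indices n k S. free_indices n k S a)"
proof
  fix z assume "z \<in> {0..<n + k}"
  show "z \<in> (\<Union>a\<in>paired_indices n k S. free_indices n k S a)"
  proof (rule ccontr)
    assume "z \<notin> (\<Union>a\<in>paired_indices n k S. free_indices n k S a)"
    then have "\<forall>a\<in>paired_indices n k S. z \<in> below_partners n k S a"
      using \<open>z \<in> {0..<n + k}\<close> unfolding free_indices_def by blast
    then have "wf ({(x, y). crown_less n k x y} \<union> S\<inverse>)"
      using wf_crown_less_Un_converse[OF assms(1,2,4)] \<open>z \<in> {0..<n + k}\<close> by simp
    then show False
      using reversible_if_wf assms(1,3) unfolding G_independent_def by blast
  qed
qed

lemma card_free_outside_paired_ge:
  assumes "G_independent n k S" "2 \<le> n" "\<not> reversible n k S"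
    and "\<forall>a\<in>paired_indices n k S. \<not> wide_gap (crown_offsets n k S a) n"
  shows "n + k - card (paired_indices n k S)
    \<le> card ((\<Union>a\<in>paired_indices n k S. free_indices n k S a) - paired_indices n k S)"
proof -
  let ?P = "paired_indices n k S" and ?F = "\<Union>a\<in>paired_indices n k S. free_indices n k S a"
  have "?P \<subseteq> {0..<n + k}" unfolding paired_indices_def by auto
  then have "n + k - card ?P = card ({0..<n + k} - ?P)"
    by (simp add: card_Diff_subset finite_paired_indices)
  also have "\<dots> \<le> card (?F - ?P)"
    using free_indices_cover[OF assms] by (intro card_mono) (auto simp: free_indices_def)
  finally show ?thesis .
qed

theorem theorem1p6:
  fixes n k :: nat and S :: "(crown_elem \<times> crown_elem) set"
  assumes "n \<ge> 3" and "n \<le> k"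
    and "S \<subseteq> crown_Inc n k"
    and "G_independent n k S"
    and "\<not> reversible n k S"
  shows "real (card S) \<le> real ((k + 1) * (k + 2)) / 2 + 2 - real n"
proof -
  let ?P = "paired_indices n k S" and ?F = "\<lambda>a. free_indices n k S a"
  define m where "m = card ?P"
  define \<Sigma>T where "\<Sigma>T = (\<Sum>a\<in>?P. card (crown_offsets n k S a))"
  define \<Sigma>F where "\<Sigma>F = (\<Sum>a\<in>?P. card (?F a))"
  have n2: "2 \<le> n" using assms(1) by simp
  have S: "card S \<le> \<Sigma>T" unfolding \<Sigma>T_def by (rule card_le_sum_card_crown_offsets[OF assms(3)])
  have pairs: "m * (m + 1) + 2 * card ((\<Union>a\<in>?P. ?F a) - ?P) \<le> 2 * \<Sigma>F"
    unfolding m_def \<Sigma>F_def by (rule card_paired_le_sum_card_free[OF assms(4)])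
  have "2 * card S + 2 * n \<le> (k + 1) * (k + 2) + 4"
  proof (cases "\<exists>a\<in>?P. wide_gap (crown_offsets n k S a) n")
    case True
    then have "\<Sigma>T + \<Sigma>F + (n - 2) \<le> m * (k + 2)"
      unfolding \<Sigma>T_def \<Sigma>F_def m_def using sum_card_crown_offsets_free_le_wide_gap[OF assms(3) n2] by blast
    then show ?thesis using S pairs two_mult_le_consecutive[of m "k + 1"] n2 by (simp add: algebra_simps)
  next
    case False
    then have "n + k - m \<le> card ((\<Union>a\<in>?P. ?F a) - ?P)"
      unfolding m_def using card_free_outside_paired_ge[OF assms(4) n2 assms(5)] by blast
    moreover have "\<Sigma>T + \<Sigma>F \<le> m * (k + 2)"
      unfolding \<Sigma>T_def \<Sigma>F_def m_def by (rule sum_card_crown_offsets_free_le[OF assms(3) n2])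
    moreover have "m \<le> n + k"
      unfolding m_def paired_indices_def by (rule card_mono[of "{..<n + k}", simplified]) auto
    ultimately show ?thesis using S pairs two_mult_le_consecutive[of m "k + 2"] by (simp add: algebra_simps)
  qed
  then have "real (2 * card S + 2 * n) \<le> real ((k + 1) * (k + 2) + 4)" by (simp only: of_nat_le_iff)
  then show ?thesis by (simp add: field_simps)
qed

end
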